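(* Let $\phi:Z\to[-\infty,+\infty]$ be proper and closed, and suppose Assumptions (A1) and (A2) hold for some $\lambda\in\mathbb R$. Then for every $\tau\in(0,1/\lambda^-)$ the resolvent $J_\tau:\overline{D\phi}\to D\phi$ is continuous.
   Context: $(X,\mathsf d_X)$, $(Y,\mathsf d_Y)$ complete metric spaces; $Z=X\times Y$ with $\mathsf d_Z=(\mathsf d_X^2+\mathsf d_Y^2)^{1/2}$. $D_X\phi=\{x:\phi(x,y)<+\infty\ \forall y\}$, $D_Y\phi=\{y:\phi(x,y)>-\infty\ \forall x\}$, $D\phi=D_X\phi\times D_Y\phi$; proper: $D\phi\ne\emptyset$; closed: for $x\in D_X\phi$, $y\mapsto\phi(x,y)$ upper semicontinuous, for $y\in D_Y\phi$, $x\mapsto\phi(x,y)$ lower semicontinuous. (A1): $\phi=+\infty$ on $(X\setminus D_X\phi)\times D_Y\phi$, $\phi=-\infty$ on $D_X\phi\times(Y\setminus D_Y\phi)$. $\lambda^-=\max\{-\lambda,0\}$, $1/\lambda^-:=+\infty$ if $\lambda^-=0$. $\Phi_\tau(x,y;x',y')=\phi(x',y')+\frac1{2\tau}(\mathsf d_X^2(x',x)-\mathsf d_Y^2(y',y))$. $f$ on $Z$ is $\mu$-convex-concave along curves $\gamma,\sigma$ if for all $t\in[0,1]$: $f(\gamma_t,y)\le(1-t)f(\gamma_0,y)+tf(\gamma_1,y)-\frac\mu2t(1-t)\mathsf d_X^2(\gamma_0,\gamma_1)$ for all $y$ and $f(x,\sigma_t)\ge(1-t)f(x,\sigma_0)+tf(x,\sigma_1)+\frac\mu2t(1-t)\mathsf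 d_Y^2(\sigma_0,\sigma_1)$ for all $x$. (A2) for $\lambda$: for every $(x,y)\in Z$, $(x_0,y_0),(x_1,y_1)\in D\phi$ there are continuous curves $\gamma$ from $x_0$ to $x_1$, $\sigma$ from $y_0$ to $y_1$ such that for all $\tau\in(0,1/\lambda^-)$, $(x',y')\mapsto\Phi_\tau(x,y;x',y')$ is $(\tau^{-1}+\lambda)$-convex-concave along them. A saddle point of $g:Z\to[-\infty,\infty]$ is $(x^*,y^* )$ with $g(x^*,y)\le g(x^*,y^* )\le g(x,y^* )$ for all $(x,y)$. Resolvent: for $z\in Z$ and $\tau\in(0,1/\lambda^-)$, $J_\tau z$ is the saddle point of $z'\mapsto\Phi_\tau(z;z')$; under the stated assumptions it exists, is unique and lies in $D\phi$. *)

theory Defs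
  imports "HOL-Analysis.Analysis"
begin

(* phi : Z = X x Y -> [-inf, +inf], curried as phi x y *)

definition DX :: "('a \<Rightarrow> 'b \<Rightarrow> ereal) \<Rightarrow> 'a set" where
  "DX \<phi> = {x. \<forall>y. \<phi> x y < \<infinity>}"

definition DY :: "('a \<Rightarrow> 'b \<Rightarrow> ereal) \<Rightarrow> 'b set" where
  "DY \<phi> = {y. \<forall>x. \<phi> x y > -\<infinity>}"

definition Dom :: "('a \<Rightarrow> 'b \<Rightarrow> ereal) \<Rightarrow> ('a \<times> 'b) set" where
  "Dom \<phi> = DX \<phi> \<times> DY \<phi>"

definition proper_sp :: "('a \<Rightarrow> 'b \<Rightarrow> ereal) \<Rightarrow> bool" where
  "proper_sp \<phi> \<longleftrightarrow> Dom \<phi> \<noteq> {}"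

definition lsc :: "('a::metric_space \<Rightarrow> ereal) \<Rightarrow> bool" where
  "lsc f \<longleftrightarrow> (\<forall>x s. s \<longlonglongrightarrow> x \<longrightarrow> f x \<le> liminf (\<lambda>n. f (s n)))"

definition usc :: "('a::metric_space \<Rightarrow> ereal) \<Rightarrow> bool" where
  "usc f \<longleftrightarrow> (\<forall>x s. s \<longlonglongrightarrow> x \<longrightarrow> limsup (\<lambda>n. f (s n)) \<le> f x)"

definition closed_sp :: "('a::metric_space \<Rightarrow> 'b::metric_space \<Rightarrow> ereal) \<Rightarrow> bool" where
  "closed_sp \<phi> \<longleftrightarrow> (\<forall>x\<in>DX \<phi>. usc (\<lambda>y. \<phi> x y)) \<and> (\<forall>y\<in>DY \<phi>. lsc (\<lambda>x. \<phi> x y))"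

definition A1 :: "('a \<Rightarrow> 'b \<Rightarrow> ereal) \<Rightarrow> bool" where
  "A1 \<phi> \<longleftrightarrow> (\<forall>x y. x \<notin> DX \<phi> \<and> y \<in> DY \<phi> \<longrightarrow> \<phi> x y = \<infinity>)
              \<and> (\<forall>x y. x \<in> DX \<phi> \<and> y \<notin> DY \<phi> \<longrightarrow> \<phi> x y = -\<infinity>)"

definition lam_minus :: "real \<Rightarrow> real" where
  "lam_minus lam = max (-lam) 0"

(* tau \<in> (0, 1/lambda^-), with 1/lambda^- = +inf when lambda^- = 0 *)
definition tau_adm :: "real \<Rightarrow> real \<Rightarrow> bool" where
  "tau_adm lam \<tau> \<longleftrightarrow> 0 < \<tau> \<and> (lam_minus lam = 0 \<or> \<tau> < 1 / lam_minus lam)"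

definition Phi :: "('a::metric_space \<Rightarrow> 'b::metric_space \<Rightarrow> ereal) \<Rightarrow> real \<Rightarrow> 'a \<Rightarrow> 'b \<Rightarrow> 'a \<Rightarrow> 'b \<Rightarrow> ereal" where
  "Phi \<phi> \<tau> x y x' y' = \<phi> x' y' + ereal ((dist x' x ^ 2 - dist y' y ^ 2) / (2 * \<tau>))"

definition cvx_ccv_along ::
  "('a::metric_space \<Rightarrow> 'b::metric_space \<Rightarrow> ereal) \<Rightarrow> real \<Rightarrow> (real \<Rightarrow> 'a) \<Rightarrow> (real \<Rightarrow> 'b) \<Rightarrow> bool" where
  "cvx_ccv_along f \<mu> \<gamma> \<sigma> \<longleftrightarrow>
     (\<forall>t\<in>{0..1}.
        (\<forall>y. f (\<gamma> t) y \<le> ereal (1 - t) * f (\<gamma> 0) y + ereal t * f (\<gamma> 1) y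
                       - ereal (\<mu> / 2 * t * (1 - t) * dist (\<gamma> 0) (\<gamma> 1) ^ 2))
      \<and> (\<forall>x. f x (\<sigma> t) \<ge> ereal (1 - t) * f x (\<sigma> 0) + ereal t * f x (\<sigma> 1)
                       + ereal (\<mu> / 2 * t * (1 - t) * dist (\<sigma> 0) (\<sigma> 1) ^ 2)))"

definition A2 :: "('a::metric_space \<Rightarrow> 'b::metric_space \<Rightarrow> ereal) \<Rightarrow> real \<Rightarrow> bool" where
  "A2 \<phi> lam \<longleftrightarrow>
    (\<forall>x y x0 y0 x1 y1. (x0, y0) \<in> Dom \<phi> \<longrightarrow> (x1, y1) \<in> Dom \<phi> \<longrightarrow>
      (\<exists>\<gamma> \<sigma>. continuous_on {0..1} \<gamma> \<and> \<gamma> 0 = x0 \<and> \<gamma> 1 = x1 \<and>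
             continuous_on {0..1} \<sigma> \<and> \<sigma> 0 = y0 \<and> \<sigma> 1 = y1 \<and>
             (\<forall>\<tau>. tau_adm lam \<tau> \<longrightarrow> cvx_ccv_along (Phi \<phi> \<tau> x y) (1 / \<tau> + lam) \<gamma> \<sigma>)))"

definition saddle_point :: "('a \<Rightarrow> 'b \<Rightarrow> ereal) \<Rightarrow> 'a \<Rightarrow> 'b \<Rightarrow> bool" where
  "saddle_point g xs ys \<longleftrightarrow> (\<forall>x y. g xs y \<le> g xs ys \<and> g xs ys \<le> g x ys)"

definition resolvent :: "('a::metric_space \<Rightarrow> 'b::metric_space \<Rightarrow> ereal) \<Rightarrow> real \<Rightarrow> 'a \<times> 'b \<Rightarrow> 'a \<times> 'b" where
  "resolvent \<phi> \<tau> z = (THE p. saddle_point (Phi \<phi> \<tau> (fst z) (snd z)) (fst p) (snd p))"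

end

theory Submission
  imports Defs
begin

text \<open>For fixed \<open>y\<close> the map \<open>x \<mapsto> \<Phi>\<^sub>\<tau>(z; x, y)\<close> is lower semicontinuous and
  \<open>(1/\<tau> + \<lambda>)\<close>-convex along the curves of (A2); by the midpoint inequality its minimising sequences are
  Cauchy, so it has a minimiser \<open>a(y)\<close> with quadratic growth. The minimal value is again
  \<open>(1/\<tau> + \<lambda>)\<close>-concave and upper semicontinuous in \<open>y\<close>, so it has a maximiser \<open>b\<close>, and
  \<open>(a(b), b)\<close> is a saddle point: concavity in \<open>y\<close> evaluated at \<open>a(\<sigma> t)\<close> along a curve from \<open>b\<close>
  to \<open>y'\<close> gives points converging to \<open>a(b)\<close> at which \<open>\<Phi>(_, y')\<close> stays below the saddle value.

  Adding the four quadratic-growth inequalities at the saddle points \<open>J z\<close> and \<open>J w\<close> cancels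
  all values of \<open>\<phi>\<close> and leaves \<open>(1 + \<tau>\<lambda>) D\<^sup>2 \<le> 2\<epsilon> D + 4\<epsilon> (d(J z, z) + \<epsilon>)\<close> for
  \<open>D = d(J w, J z)\<close>, \<open>\<epsilon> = d(w, z)\<close>. This gives uniqueness of the saddle point and continuity
  of \<open>J\<^sub>\<tau>\<close> on all of \<open>Z\<close>, not only on the closure of the domain.\<close>

lemma tau_adm_iff: "tau_adm lam \<tau> \<longleftrightarrow> 0 < \<tau> \<and> 0 < 1/\<tau> + lam"
proof (cases "lam \<ge> 0")
  case True
  then show ?thesis
    unfolding tau_adm_def lam_minus_def by (auto intro: add_pos_nonneg)
next
  case False
  then have "0 < -lam" by simp
  then have "0 < \<tau> \<Longrightarrow> \<tau> < 1 / (-lam) \<longleftrightarrow> -lam < 1/\<tau>"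
    by (simp only: pos_less_divide_eq mult.commute)
  then show ?thesis
    unfolding tau_adm_def lam_minus_def using False by auto
qed

lemma tau_adm_exists: "tau_adm lam (1 / (\<bar>lam\<bar> + 1))"
  unfolding tau_adm_iff by (cases "lam \<ge> 0") auto

lemma tau_adm_smaller:
  assumes "tau_adm lam \<tau>" "0 < \<tau>'" "\<tau>' \<le> \<tau>"
  shows "tau_adm lam \<tau>'"
proof -
  have "1/\<tau> \<le> 1/\<tau>'" using assms by (simp add: frac_le)
  then show ?thesis using assms unfolding tau_adm_iff by linarith
qed

lemma tau_adm_pos:
  assumes "tau_adm lam \<tau>"
  shows "0 < 1 + \<tau> * lam"
proof -
  have "0 < \<tau>" "0 < 1/\<tau> + lam" using assms unfolding tau_adm_iff by auto
  moreover have "1 + \<tau> * lam = \<tau> * (1/\<tau> + lam)" using \<open>0 < \<tau>\<close> by (simp add: field_simps)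
  ultimately show ?thesis by simp
qed

section \<open>Minimisation of Moreau--Yosida functionals\<close>

abbreviation moreau :: "('m::metric_space \<Rightarrow> real) \<Rightarrow> real \<Rightarrow> 'm \<Rightarrow> 'm \<Rightarrow> real" where
  "moreau F \<tau> w v \<equiv> F v + (dist v w)^2 / (2*\<tau>)"

definition closed_sublevels :: "'m::metric_space set \<Rightarrow> ('m \<Rightarrow> real) \<Rightarrow> bool" where
  "closed_sublevels D F \<longleftrightarrow>
     (\<forall>s x B. (\<forall>n. s n \<in> D) \<longrightarrow> s \<longlonglongrightarrow> x \<longrightarrow> (\<forall>n. F (s n) \<le> B) \<longrightarrow> x \<in> D \<and> F x \<le> B)"

text \<open>Assumption 4.0.1 of Ambrosio, Gigli and Savare: the Moreau--Yosida functionals with centre \<open>w\<close> are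
  \<open>(1/\<tau> + lam)\<close>-convex along one curve, which may depend on \<open>w\<close> but not on \<open>\<tau>\<close>.\<close>
definition moreau_convex :: "'m::metric_space set \<Rightarrow> ('m \<Rightarrow> real) \<Rightarrow> real \<Rightarrow> bool" where
  "moreau_convex D F lam \<longleftrightarrow> (\<forall>w x0 x1. x0 \<in> D \<longrightarrow> x1 \<in> D \<longrightarrow>
     (\<exists>\<gamma>. continuous_on {0..1} \<gamma> \<and> \<gamma> 0 = x0 \<and> \<gamma> 1 = x1 \<and> (\<forall>t\<in>{0..1}. \<gamma> t \<in> D) \<and>
       (\<forall>\<tau>. tau_adm lam \<tau> \<longrightarrow> (\<forall>t\<in>{0..1}.
          moreau F \<tau> w (\<gamma> t) \<le> (1-t) * moreau F \<tau> w x0 + t * moreau F \<tau> w x1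
            - (1/\<tau>+lam)/2*t*(1-t)*(dist x0 x1)^2))))"

lemma closed_sublevelsD:
  "closed_sublevels D F \<Longrightarrow> (\<And>n. s n \<in> D) \<Longrightarrow> s \<longlonglongrightarrow> x \<Longrightarrow> (\<And>n. F (s n) \<le> B) \<Longrightarrow> x \<in> D \<and> F x \<le> B"
  unfolding closed_sublevels_def by blast

lemma closed_sublevels_limit:
  assumes cl: "closed_sublevels D F" and sD: "\<And>n. s n \<in> D" and sx: "s \<longlonglongrightarrow> x"
    and cc: "c \<longlonglongrightarrow> c0" and bd: "\<forall>\<^sub>F n in sequentially. F (s n) + c n \<le> B"
  shows "x \<in> D \<and> F x + c0 \<le> B"
proof -
  have approx: "x \<in> D \<and> F x \<le> B - c0 + e" if "e > 0" for e
  proof -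
    have "\<forall>\<^sub>F n in sequentially. c0 - e < c n"
      using order_tendstoD(1)[OF cc, of "c0 - e"] \<open>e > 0\<close> by simp
    with bd have "\<forall>\<^sub>F n in sequentially. F (s n) \<le> B - c0 + e"
      by eventually_elim linarith
    then obtain N where N: "\<And>n. n \<ge> N \<Longrightarrow> F (s n) \<le> B - c0 + e"
      unfolding eventually_sequentially by blast
    show ?thesis
      by (rule closed_sublevelsD[OF cl _ LIMSEQ_ignore_initial_segment[OF sx, of N]]) (simp_all add: sD N)
  qed
  have "F x \<le> B - c0"
    by (rule field_le_epsilon) (use approx in blast)
  then show ?thesis using approx[of 1] by simp
qed

lemma closed_sublevels_bounded_below_near:
  assumes cl: "closed_sublevels D F" and u0: "u0 \<in> D"
  shows "\<exists>r>0. \<forall>v\<in>D. dist v u0 \<le> r \<longrightarrow> F u0 - 1 \<le> F v"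
proof (rule ccontr)
  assume "\<not> ?thesis"
  then have "\<forall>n. \<exists>v. v \<in> D \<and> dist v u0 \<le> inverse (real (Suc n)) \<and> F v < F u0 - 1"
    by (metis not_le inverse_positive_iff_positive of_nat_0_less_iff zero_less_Suc)
  then obtain v where v: "\<And>n. v n \<in> D" "\<And>n. dist (v n) u0 \<le> inverse (real (Suc n))"
      "\<And>n. F (v n) < F u0 - 1"
    by metis
  have "(\<lambda>n. dist (v n) u0) \<longlonglongrightarrow> 0"
    by (rule tendsto_sandwich[OF _ _ tendsto_const LIMSEQ_inverse_real_of_nat]) (use v in auto)
  then have "v \<longlonglongrightarrow> u0" using tendsto_dist_iff by blast
  then have "F u0 \<le> F u0 - 1"
    using closed_sublevelsD[OF cl, of v u0 "F u0 - 1"] v by (simp add: less_imp_le)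
  then show False by simp
qed

lemma moreau_convexE:
  assumes "moreau_convex D F lam" "x0 \<in> D" "x1 \<in> D"
  obtains \<gamma> where "continuous_on {0..1} \<gamma>" "\<gamma> 0 = x0" "\<gamma> 1 = x1" "\<And>t. t \<in> {0..1} \<Longrightarrow> \<gamma> t \<in> D"
    "\<And>\<tau> t. tau_adm lam \<tau> \<Longrightarrow> t \<in> {0..1} \<Longrightarrow>
       moreau F \<tau> w (\<gamma> t) \<le> (1-t) * moreau F \<tau> w x0 + t * moreau F \<tau> w x1
         - (1/\<tau>+lam)/2*t*(1-t)*(dist x0 x1)^2"
  using assms unfolding moreau_convex_def by metis

text \<open>A curve from \<open>u0\<close> to a far point \<open>v\<close> crosses the sphere of radius \<open>r\<close> around \<open>u0\<close>, where
  \<open>F\<close> is bounded below; convexity along the curve transfers the bound to \<open>v\<close>.\<close>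
lemma moreau_bounded_below_small_tau:
  assumes cl: "closed_sublevels D F" and cv: "moreau_convex D F lam" and u0: "u0 \<in> D"
  shows "\<exists>\<tau>. tau_adm lam \<tau> \<and> (\<forall>v\<in>D. F u0 - 1 \<le> moreau F \<tau> u0 v)"
proof -
  obtain r where r: "r > 0" "\<And>v. v \<in> D \<Longrightarrow> dist v u0 \<le> r \<Longrightarrow> F u0 - 1 \<le> F v"
    using closed_sublevels_bounded_below_near[OF cl u0] by blast
  define \<tau> where "\<tau> = min (r^2/2) (1 / (\<bar>lam\<bar> + 1))"
  have \<tau>: "0 < \<tau>"
    unfolding \<tau>_def using r(1) by (simp add: add_pos_nonneg)
  then have adm: "tau_adm lam \<tau>"
    by (rule tau_adm_smaller[OF tau_adm_exists]) (simp add: \<tau>_def)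
  have "2 * \<tau> \<le> r^2" unfolding \<tau>_def by linarith
  then have big: "1 \<le> r^2/(2*\<tau>)" using \<tau> by simp
  have "F u0 - 1 \<le> moreau F \<tau> u0 v" if v: "v \<in> D" for v
  proof (cases "dist v u0 \<le> r")
    case True
    moreover have "0 \<le> (dist v u0)^2/(2*\<tau>)" using \<tau> by simp
    ultimately show ?thesis using r(2) v by fastforce
  next
    case False
    obtain \<gamma> where g: "continuous_on {0..1} \<gamma>" "\<gamma> 0 = u0" "\<gamma> 1 = v" "\<And>t. t \<in> {0..1} \<Longrightarrow> \<gamma> t \<in> D"
      "\<And>\<tau> t. tau_adm lam \<tau> \<Longrightarrow> t \<in> {0..1} \<Longrightarrow>
          moreau F \<tau> u0 (\<gamma> t) \<le> (1-t) * moreau F \<tau> u0 u0 + t * moreau F \<tau> u0 v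
            - (1/\<tau>+lam)/2*t*(1-t)*(dist u0 v)^2"
      using moreau_convexE[OF cv u0 v] by metis
    have "continuous_on {0..1} (\<lambda>t. dist (\<gamma> t) u0)"
      by (intro continuous_on_dist g(1) continuous_on_const)
    then obtain t where t: "0 \<le> t" "t \<le> 1" "dist (\<gamma> t) u0 = r"
      using IVT'[of "\<lambda>t. dist (\<gamma> t) u0" 0 r 1] g(2,3) r(1) False by auto
    have "0 < t" using t g(2) r(1) by (cases "t = 0") auto
    have "F u0 - 1 \<le> F (\<gamma> t)"
      using r(2)[OF g(4)] t by simp
    then have "F u0 \<le> moreau F \<tau> u0 (\<gamma> t)"
      using t(3) big by simp
    also have "\<dots> \<le> (1-t) * F u0 + t * moreau F \<tau> u0 v - (1/\<tau>+lam)/2*t*(1-t)*(dist u0 v)^2"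
      using g(5)[OF adm, of t] t by simp
    also have "\<dots> \<le> (1-t) * F u0 + t * moreau F \<tau> u0 v"
      using t \<tau> adm unfolding tau_adm_iff by (simp add: mult_nonneg_nonneg)
    finally have "t * F u0 \<le> t * moreau F \<tau> u0 v" by (simp add: algebra_simps)
    then show ?thesis using \<open>0 < t\<close> by simp
  qed
  then show ?thesis using adm by blast
qed

lemma moreau_minimizer_growth:
  assumes cv: "moreau_convex D F lam" and adm: "tau_adm lam \<tau>" and u: "u \<in> D"
    and min: "\<And>v. v \<in> D \<Longrightarrow> moreau F \<tau> w u \<le> moreau F \<tau> w v" and v: "v \<in> D"
  shows "moreau F \<tau> w u + (1/\<tau>+lam)/2 * (dist u v)^2 \<le> moreau F \<tau> w v"
proof -
  define G where "G = moreau F \<tau> w"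
  define c where "c = (1/\<tau>+lam)/2 * (dist u v)^2"
  obtain \<gamma> where g: "\<And>t. t \<in> {0..1} \<Longrightarrow> \<gamma> t \<in> D"
      "\<And>\<tau> t. tau_adm lam \<tau> \<Longrightarrow> t \<in> {0..1} \<Longrightarrow>
         moreau F \<tau> w (\<gamma> t) \<le> (1-t) * moreau F \<tau> w u + t * moreau F \<tau> w v
           - (1/\<tau>+lam)/2*t*(1-t)*(dist u v)^2"
    using moreau_convexE[OF cv u v] by metis
  have "G u + (1-t) * c \<le> G v" if t: "0 < t" "t < 1" for t
  proof -
    have tin: "t \<in> {0..1}" using t by simp
    have "(1/\<tau>+lam)/2*t*(1-t)*(dist u v)^2 = t * ((1-t) * c)"
      unfolding c_def by (simp add: algebra_simps)
    then have "G u \<le> (1-t) * G u + t * G v - t * ((1-t) * c)"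
      using min[OF g(1)[OF tin]] g(2)[OF adm tin] unfolding G_def by linarith
    then have "t * (G u + (1-t) * c) \<le> t * G v"
      by (simp add: algebra_simps)
    then show ?thesis using t by simp
  qed
  then have "\<forall>\<^sub>F t in at_right 0. G u + (1-t) * c \<le> G v"
    unfolding eventually_at_right_field by (intro exI[of _ 1]) auto
  moreover have "((\<lambda>t. G u + (1-t) * c) \<longlongrightarrow> G u + c) (at_right 0)"
    by (auto intro!: tendsto_eq_intros)
  ultimately have "G u + c \<le> G v"
    by (intro tendsto_upperbound) (auto simp: trivial_limit_at_right_real)
  then show ?thesis unfolding G_def c_def .
qed

lemma Cauchy_if_dist_power2_le:
  fixes s :: "nat \<Rightarrow> 'm::metric_space"
  assumes dist_le: "\<And>n k. (dist (s n) (s k))^2 \<le> e n + e k" and e: "e \<longlonglongrightarrow> 0"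
  shows "Cauchy s"
proof (rule metric_CauchyI)
  fix r :: real assume "0 < r"
  then have "0 < r^2/2" by simp
  then have "\<forall>\<^sub>F n in sequentially. e n < r^2/2" by (rule order_tendstoD(2)[OF e])
  then obtain M where M: "\<And>n. n \<ge> M \<Longrightarrow> e n < r^2/2" unfolding eventually_sequentially by blast
  have "dist (s n) (s k) < r" if "n \<ge> M" "k \<ge> M" for n k
  proof -
    have "(dist (s n) (s k))^2 < r^2" using dist_le[of n k] M[OF that(1)] M[OF that(2)] by linarith
    then show ?thesis using \<open>0 < r\<close> by (simp add: power_less_imp_less_base)
  qed
  then show "\<exists>M. \<forall>m\<ge>M. \<forall>n\<ge>M. dist (s m) (s n) < r" by blast
qed

lemma moreau_midpoint_dist_le:
  assumes cv: "moreau_convex D F lam" and adm: "tau_adm lam \<tau>" and x0: "x0 \<in> D" and x1: "x1 \<in> D"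
    and lb: "\<And>v. v \<in> D \<Longrightarrow> m \<le> moreau F \<tau> w v"
  shows "(1/\<tau>+lam) * (dist x0 x1)^2 \<le> 4 * (moreau F \<tau> w x0 - m) + 4 * (moreau F \<tau> w x1 - m)"
proof -
  define G where "G = moreau F \<tau> w"
  obtain \<gamma> where g: "\<And>t. t \<in> {0..1} \<Longrightarrow> \<gamma> t \<in> D"
      "\<And>\<tau> t. tau_adm lam \<tau> \<Longrightarrow> t \<in> {0..1} \<Longrightarrow>
         moreau F \<tau> w (\<gamma> t) \<le> (1-t) * moreau F \<tau> w x0 + t * moreau F \<tau> w x1
           - (1/\<tau>+lam)/2*t*(1-t)*(dist x0 x1)^2"
    using moreau_convexE[OF cv x0 x1] by metis
  define X where "X = (1/\<tau>+lam) * (dist x0 x1)^2"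
  have "G (\<gamma> (1/2)) \<le> G x0 / 2 + G x1 / 2 - X / 8"
    using g(2)[OF adm, of "1/2"] unfolding G_def X_def by simp
  moreover have "m \<le> G (\<gamma> (1/2))" using lb g(1) unfolding G_def by simp
  ultimately have "X \<le> 4 * (G x0 - m) + 4 * (G x1 - m)"
    by argo
  then show ?thesis unfolding G_def X_def .
qed

lemma moreau_minimizing_sequence_Cauchy:
  assumes cv: "moreau_convex D F lam" and adm: "tau_adm lam \<tau>" and sD: "\<And>n. s n \<in> D"
    and lb: "\<And>v. v \<in> D \<Longrightarrow> m \<le> moreau F \<tau> w v"
    and s_min: "\<And>n. moreau F \<tau> w (s n) \<le> m + e n" and e: "e \<longlonglongrightarrow> 0"
  shows "Cauchy s"
proof (rule Cauchy_if_dist_power2_le)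
  define \<mu> where "\<mu> = 1/\<tau> + lam"
  have \<mu>: "0 < \<mu>" using adm unfolding tau_adm_iff \<mu>_def by auto
  fix n k
  have "\<mu> * (dist (s n) (s k))^2 \<le> 4 * (moreau F \<tau> w (s n) - m) + 4 * (moreau F \<tau> w (s k) - m)"
    unfolding \<mu>_def by (intro moreau_midpoint_dist_le[OF cv adm sD sD] lb)
  then have "\<mu> * (dist (s n) (s k))^2 \<le> 4 * e n + 4 * e k"
    using s_min[of n] s_min[of k] by argo
  then show "(dist (s n) (s k))^2 \<le> 4 * e n / \<mu> + 4 * e k / \<mu>"
    using \<mu> by (simp add: field_simps)
next
  show "(\<lambda>n. 4 * e n / (1/\<tau> + lam)) \<longlonglongrightarrow> 0"
    by (intro tendsto_divide_zero tendsto_mult_right_zero e)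
qed

lemma moreau_minimizer_exists_if_bounded_below:
  fixes D :: "'m::complete_space set"
  assumes cl: "closed_sublevels D F" and cv: "moreau_convex D F lam" and adm: "tau_adm lam \<tau>"
    and ne: "D \<noteq> {}" and bdd: "\<And>v. v \<in> D \<Longrightarrow> m0 \<le> moreau F \<tau> w v"
  shows "\<exists>u\<in>D. \<forall>v\<in>D. moreau F \<tau> w u \<le> moreau F \<tau> w v"
proof -
  define m where "m = Inf (moreau F \<tau> w ` D)"
  have \<tau>: "0 < \<tau>" using adm unfolding tau_adm_iff by simp
  have m_le: "m \<le> moreau F \<tau> w v" if "v \<in> D" for v
    unfolding m_def using bdd that by (intro cInf_lower bdd_belowI2) auto
  have "\<exists>v\<in>D. moreau F \<tau> w v \<le> m + inverse (real (Suc n))" for n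
  proof (rule ccontr)
    assume "\<not> ?thesis"
    then have "m + inverse (real (Suc n)) \<le> m"
      unfolding m_def using ne by (intro cInf_greatest) (auto simp: not_le less_imp_le)
    then show False by simp
  qed
  then obtain s where sD: "\<And>n. s n \<in> D"
    and s_min: "\<And>n. moreau F \<tau> w (s n) \<le> m + inverse (real (Suc n))"
    by metis
  have "Cauchy s"
    by (rule moreau_minimizing_sequence_Cauchy[OF cv adm sD m_le s_min LIMSEQ_inverse_real_of_nat])
  then obtain u where su: "s \<longlonglongrightarrow> u" using Cauchy_convergent convergent_def by blast
  have "(\<lambda>n. (dist (s n) w)^2/(2*\<tau>) - inverse (real (Suc n))) \<longlonglongrightarrow> (dist u w)^2/(2*\<tau>) - 0"
    using \<tau> by (intro tendsto_intros su LIMSEQ_inverse_real_of_nat) simp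
  moreover have "\<forall>\<^sub>F n in sequentially. F (s n) + ((dist (s n) w)^2/(2*\<tau>) - inverse (real (Suc n))) \<le> m"
    using s_min by (intro always_eventually allI) (simp add: algebra_simps)
  ultimately have "u \<in> D \<and> moreau F \<tau> w u \<le> m"
    using closed_sublevels_limit[OF cl sD su] by simp
  then show ?thesis using m_le by (blast intro: order_trans)
qed

lemma moreau_bounded_below_if_quadratic_bound:
  assumes adm: "tau_adm lam \<tau>"
    and lb: "\<And>v. v \<in> D \<Longrightarrow> C - k * dist u v + lam/2 * (dist u v)^2 \<le> F v"
  shows "\<exists>m. \<forall>v\<in>D. m \<le> moreau F \<tau> w v"
proof -
  define \<mu> where "\<mu> = 1/\<tau> + lam"
  define b where "b = dist u w"
  define K where "K = k + b/\<tau>"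
  have \<tau>: "0 < \<tau>" "0 < \<mu>" using adm unfolding tau_adm_iff \<mu>_def by auto
  have "C + b^2/(2*\<tau>) - K^2/(2*\<mu>) \<le> moreau F \<tau> w v" if v: "v \<in> D" for v
  proof -
    define e where "e = dist u v"
    have "\<bar>e - b\<bar> \<le> dist v w"
      unfolding e_def b_def using dist_triangle[of u v w] dist_triangle[of u w v]
      by (simp add: dist_commute abs_le_iff)
    then have "(e - b)^2 \<le> (dist v w)^2"
      by (metis abs_ge_zero power2_abs power_mono)
    then have "(e - b)^2/(2*\<tau>) \<le> (dist v w)^2/(2*\<tau>)" using \<tau> by (simp add: divide_right_mono)
    moreover have "C - k * e + lam/2 * e^2 + (e - b)^2/(2*\<tau>) = C + b^2/(2*\<tau>) + (\<mu>/2 * e^2 - K * e)"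
      unfolding \<mu>_def K_def using \<tau> by (simp add: field_simps power2_eq_square)
    moreover have "0 \<le> (\<mu> * e - K)^2 / (2*\<mu>)" using \<tau> by simp
    moreover have "(\<mu> * e - K)^2 / (2*\<mu>) = \<mu>/2 * e^2 - K * e + K^2/(2*\<mu>)"
      using \<tau> by (simp add: field_simps power2_eq_square)
    ultimately show ?thesis using lb[OF v] unfolding e_def by linarith
  qed
  then show ?thesis by blast
qed

text \<open>A minimiser for a small step size gives a quadratic lower bound on \<open>F\<close>, which makes every
  Moreau--Yosida functional bounded below.\<close>
lemma moreau_minimizer_exists:
  fixes D :: "'m::complete_space set"
  assumes cl: "closed_sublevels D F" and cv: "moreau_convex D F lam" and adm: "tau_adm lam \<tau>"
    and ne: "D \<noteq> {}"
  shows "\<exists>u\<in>D. \<forall>v\<in>D. moreau F \<tau> w u \<le> moreau F \<tau> w v"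
proof -
  obtain u0 where u0: "u0 \<in> D" using ne by blast
  obtain \<tau>1 where adm1: "tau_adm lam \<tau>1" and bdd1: "\<And>v. v \<in> D \<Longrightarrow> F u0 - 1 \<le> moreau F \<tau>1 u0 v"
    using moreau_bounded_below_small_tau[OF cl cv u0] by blast
  obtain u1 where u1: "u1 \<in> D" "\<And>v. v \<in> D \<Longrightarrow> moreau F \<tau>1 u0 u1 \<le> moreau F \<tau>1 u0 v"
    using moreau_minimizer_exists_if_bounded_below[OF cl cv adm1 ne bdd1] by blast
  have \<tau>1: "0 < \<tau>1" using adm1 unfolding tau_adm_iff by simp
  define a where "a = dist u1 u0"
  have "F u1 - a/\<tau>1 * dist u1 v + lam/2 * (dist u1 v)^2 \<le> F v" if v: "v \<in> D" for v
  proof -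
    define e where "e = dist u1 v"
    have "dist v u0 \<le> e + a"
      unfolding e_def a_def using dist_triangle[of v u0 u1] by (simp add: dist_commute)
    then have "(dist v u0)^2/(2*\<tau>1) \<le> (e + a)^2/(2*\<tau>1)"
      using \<tau>1 by (simp add: divide_right_mono power_mono)
    moreover have "(1/\<tau>1+lam)/2 * e^2 - (e + a)^2/(2*\<tau>1) = lam/2 * e^2 - a/\<tau>1 * e - a^2/(2*\<tau>1)"
      using \<tau>1 by (simp add: field_simps power2_eq_square)
    ultimately show ?thesis
      using moreau_minimizer_growth[OF cv adm1 u1 v] unfolding e_def a_def by linarith
  qed
  then have "\<exists>m. \<forall>v\<in>D. m \<le> moreau F \<tau> w v"
    by (rule moreau_bounded_below_if_quadratic_bound[OF adm])
  then obtain m where "\<And>v. v \<in> D \<Longrightarrow> m \<le> moreau F \<tau> w v" by blast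
  then show ?thesis using moreau_minimizer_exists_if_bounded_below[OF cl cv adm ne] by blast
qed

lemma concave_ineq_neg:
  fixes t P0 P1 Pt c :: real
  assumes "(1-t)*P0 + t*P1 + c \<le> Pt"
  shows "-Pt \<le> (1-t)*(-P0) + t*(-P1) - c"
  using assms by (simp add: algebra_simps)

lemma power2_dist_diff_le:
  assumes "dist x x' \<le> e" and "dist p x' \<le> r"
  shows "(dist p x)^2 - (dist p x')^2 \<le> e * (2*r + e)"
proof -
  have "dist p x \<le> dist p x' + e" using dist_triangle[of p x x'] assms(1) by (simp add: dist_commute)
  then have "(dist p x)^2 \<le> (dist p x' + e)^2" by (simp add: power_mono)
  also have "\<dots> = (dist p x')^2 + e * (2 * dist p x' + e)" by (simp add: power2_eq_square algebra_simps)
  also have "e * (2 * dist p x' + e) \<le> e * (2*r + e)"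
    using assms zero_le_dist[of x x'] by (intro mult_left_mono) linarith+
  finally show ?thesis by simp
qed

lemma quadratic_inequality_bound:
  fixes c d p q :: real
  assumes "0 < c" "0 \<le> d" "0 \<le> p" "0 \<le> q" and "c * d^2 \<le> p * d + q"
  shows "d \<le> p/c + sqrt (q/c)"
proof (cases "d \<le> p/c")
  case True
  moreover have "0 \<le> sqrt (q/c)" using assms by simp
  ultimately show ?thesis by linarith
next
  case False
  then have pos: "0 < d - p/c" by simp
  have "d - p/c \<le> d" using assms(1,3) by simp
  then have "(d - p/c)^2 \<le> d * (d - p/c)"
    using pos by (simp add: power2_eq_square mult_right_mono)
  also have "\<dots> = (c * d^2 - p * d) / c" using assms(1) by (simp add: field_simps power2_eq_square)
  also have "\<dots> \<le> q/c" using assms(1,5) by (simp add: divide_right_mono)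
  finally have "(d - p/c)^2 \<le> q/c" .
  then have "d - p/c \<le> sqrt (q/c)" using pos by (simp add: real_le_rsqrt)
  then show ?thesis by simp
qed

section \<open>Saddle points of \<open>Phi\<close>\<close>

definition phi_real :: "('a \<Rightarrow> 'b \<Rightarrow> ereal) \<Rightarrow> 'a \<Rightarrow> 'b \<Rightarrow> real" where
  "phi_real \<phi> x y = real_of_ereal (\<phi> x y)"

abbreviation Phi_real ::
  "('a::metric_space \<Rightarrow> 'b::metric_space \<Rightarrow> ereal) \<Rightarrow> real \<Rightarrow> 'a \<Rightarrow> 'b \<Rightarrow> 'a \<Rightarrow> 'b \<Rightarrow> real" where
  "Phi_real \<phi> \<tau> x y x' y' \<equiv> phi_real \<phi> x' y' + (dist x' x)^2/(2*\<tau>) - (dist y' y)^2/(2*\<tau>)"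

definition argmin_x :: "('a::metric_space \<Rightarrow> 'b::metric_space \<Rightarrow> ereal) \<Rightarrow> real \<Rightarrow> 'a \<Rightarrow> 'b \<Rightarrow> 'a" where
  "argmin_x \<phi> \<tau> xz y = (SOME u. u \<in> DX \<phi> \<and>
     (\<forall>v\<in>DX \<phi>. moreau (\<lambda>x. phi_real \<phi> x y) \<tau> xz u \<le> moreau (\<lambda>x. phi_real \<phi> x y) \<tau> xz v))"

text \<open>\<open>min_x \<phi> \<tau> xz y - (dist y yz)^2/(2*\<tau>)\<close> is the minimum of \<open>Phi_real \<phi> \<tau> xz yz x y\<close> over \<open>x\<close>.\<close>
definition min_x :: "('a::metric_space \<Rightarrow> 'b::metric_space \<Rightarrow> ereal) \<Rightarrow> real \<Rightarrow> 'a \<Rightarrow> 'b \<Rightarrow> real" where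
  "min_x \<phi> \<tau> xz y = moreau (\<lambda>x. phi_real \<phi> x y) \<tau> xz (argmin_x \<phi> \<tau> xz y)"

locale saddle_problem =
  fixes \<phi> :: "'a::complete_space \<Rightarrow> 'b::complete_space \<Rightarrow> ereal" and lam :: real
  assumes proper: "proper_sp \<phi>" and closed: "closed_sp \<phi>" and A1: "A1 \<phi>" and A2: "A2 \<phi> lam"
begin

lemma DX_nonempty: "DX \<phi> \<noteq> {}" and DY_nonempty: "DY \<phi> \<noteq> {}"
  using proper unfolding proper_sp_def Dom_def by auto

lemma phi_finite: "x \<in> DX \<phi> \<Longrightarrow> y \<in> DY \<phi> \<Longrightarrow> \<phi> x y = ereal (phi_real \<phi> x y)"
  unfolding phi_real_def DX_def DY_def by (cases "\<phi> x y") auto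

lemma phi_notin_DX: "x \<notin> DX \<phi> \<Longrightarrow> y \<in> DY \<phi> \<Longrightarrow> \<phi> x y = \<infinity>"
  using A1 unfolding A1_def by blast

lemma phi_notin_DY: "x \<in> DX \<phi> \<Longrightarrow> y \<notin> DY \<phi> \<Longrightarrow> \<phi> x y = -\<infinity>"
  using A1 unfolding A1_def by blast

lemma Phi_finite:
  "x' \<in> DX \<phi> \<Longrightarrow> y' \<in> DY \<phi> \<Longrightarrow> Phi \<phi> \<tau> x y x' y' = ereal (Phi_real \<phi> \<tau> x y x' y')"
  unfolding Phi_def using phi_finite by (simp add: diff_divide_distrib)

text \<open>Curves of (A2) with endpoints in the domain stay in the domain: a point outside would make
  \<open>Phi\<close> infinite at a point where the convexity inequality bounds it by finite values.\<close>
lemma A2_curves: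
  assumes x0: "x0 \<in> DX \<phi>" and x1: "x1 \<in> DX \<phi>" and y0: "y0 \<in> DY \<phi>" and y1: "y1 \<in> DY \<phi>"
  obtains \<gamma> \<sigma> where "continuous_on {0..1} \<gamma>" "\<gamma> 0 = x0" "\<gamma> 1 = x1"
    "continuous_on {0..1} \<sigma>" "\<sigma> 0 = y0" "\<sigma> 1 = y1"
    "\<And>t. t \<in> {0..1} \<Longrightarrow> \<gamma> t \<in> DX \<phi>" "\<And>t. t \<in> {0..1} \<Longrightarrow> \<sigma> t \<in> DY \<phi>"
    "\<And>\<tau> t y'. tau_adm lam \<tau> \<Longrightarrow> t \<in> {0..1} \<Longrightarrow> y' \<in> DY \<phi> \<Longrightarrow>
       Phi_real \<phi> \<tau> x y (\<gamma> t) y' \<le> (1-t) * Phi_real \<phi> \<tau> x y x0 y' + t * Phi_real \<phi> \<tau> x y x1 y'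
          - (1/\<tau>+lam)/2*t*(1-t)*(dist x0 x1)^2"
    "\<And>\<tau> t x'. tau_adm lam \<tau> \<Longrightarrow> t \<in> {0..1} \<Longrightarrow> x' \<in> DX \<phi> \<Longrightarrow>
       (1-t) * Phi_real \<phi> \<tau> x y x' y0 + t * Phi_real \<phi> \<tau> x y x' y1 + (1/\<tau>+lam)/2*t*(1-t)*(dist y0 y1)^2
          \<le> Phi_real \<phi> \<tau> x y x' (\<sigma> t)"
proof -
  have "(x0, y0) \<in> Dom \<phi>" "(x1, y1) \<in> Dom \<phi>" using assms unfolding Dom_def by auto
  then obtain \<gamma> \<sigma> where g: "continuous_on {0..1} \<gamma>" "\<gamma> 0 = x0" "\<gamma> 1 = x1"
    "continuous_on {0..1} \<sigma>" "\<sigma> 0 = y0" "\<sigma> 1 = y1"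
    and cc: "\<And>\<tau>. tau_adm lam \<tau> \<Longrightarrow> cvx_ccv_along (Phi \<phi> \<tau> x y) (1/\<tau>+lam) \<gamma> \<sigma>"
    using A2 unfolding A2_def by blast
  have cx: "Phi \<phi> \<tau> x y (\<gamma> t) y' \<le> ereal (1-t) * Phi \<phi> \<tau> x y x0 y' + ereal t * Phi \<phi> \<tau> x y x1 y'
     - ereal ((1/\<tau>+lam)/2*t*(1-t)*(dist x0 x1)^2)"
    if "tau_adm lam \<tau>" "t \<in> {0..1}" for \<tau> t y'
    using cc[OF that(1)] that(2) g(2,3) unfolding cvx_ccv_along_def by blast
  have cy: "ereal (1-t) * Phi \<phi> \<tau> x y x' y0 + ereal t * Phi \<phi> \<tau> x y x' y1
     + ereal ((1/\<tau>+lam)/2*t*(1-t)*(dist y0 y1)^2) \<le> Phi \<phi> \<tau> x y x' (\<sigma> t)"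
    if "tau_adm lam \<tau>" "t \<in> {0..1}" for \<tau> t x'
    using cc[OF that(1)] that(2) g(5,6) unfolding cvx_ccv_along_def by blast
  note adm = tau_adm_exists[of lam]
  have \<gamma>_DX: "\<gamma> t \<in> DX \<phi>" if t: "t \<in> {0..1}" for t
  proof (rule ccontr)
    assume "\<gamma> t \<notin> DX \<phi>"
    then have "Phi \<phi> (1 / (\<bar>lam\<bar> + 1)) x y (\<gamma> t) y0 = \<infinity>"
      unfolding Phi_def using phi_notin_DX[OF _ y0] by simp
    then show False using cx[OF adm t, of y0] unfolding Phi_finite[OF x0 y0] Phi_finite[OF x1 y0] by simp
  qed
  have \<sigma>_DY: "\<sigma> t \<in> DY \<phi>" if t: "t \<in> {0..1}" for t
  proof (rule ccontr)
    assume "\<sigma> t \<notin> DY \<phi>"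
    then have "Phi \<phi> (1 / (\<bar>lam\<bar> + 1)) x y x0 (\<sigma> t) = -\<infinity>"
      unfolding Phi_def using phi_notin_DY[OF x0] by simp
    then show False using cy[OF adm t, of x0] unfolding Phi_finite[OF x0 y0] Phi_finite[OF x0 y1] by simp
  qed
  show ?thesis
  proof (rule that[OF g(1-6) \<gamma>_DX \<sigma>_DY])
    fix \<tau> t :: real and y' assume h: "tau_adm lam \<tau>" "t \<in> {0..1}" "y' \<in> DY \<phi>"
    show "Phi_real \<phi> \<tau> x y (\<gamma> t) y' \<le> (1-t) * Phi_real \<phi> \<tau> x y x0 y' + t * Phi_real \<phi> \<tau> x y x1 y'
          - (1/\<tau>+lam)/2*t*(1-t)*(dist x0 x1)^2"
      using cx[OF h(1,2), of y'] unfolding Phi_finite[OF x0 h(3)] Phi_finite[OF x1 h(3)]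
        Phi_finite[OF \<gamma>_DX[OF h(2)] h(3)]
      by simp
  next
    fix \<tau> t :: real and x' assume h: "tau_adm lam \<tau>" "t \<in> {0..1}" "x' \<in> DX \<phi>"
    show "(1-t) * Phi_real \<phi> \<tau> x y x' y0 + t * Phi_real \<phi> \<tau> x y x' y1 + (1/\<tau>+lam)/2*t*(1-t)*(dist y0 y1)^2
          \<le> Phi_real \<phi> \<tau> x y x' (\<sigma> t)"
      using cy[OF h(1,2), of x'] unfolding Phi_finite[OF h(3) y0] Phi_finite[OF h(3) y1]
        Phi_finite[OF h(3) \<sigma>_DY[OF h(2)]]
      by simp
  qed
qed

lemma closed_sublevels_x:
  assumes y: "y \<in> DY \<phi>"
  shows "closed_sublevels (DX \<phi>) (\<lambda>x. phi_real \<phi> x y)"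
  unfolding closed_sublevels_def
proof (intro allI impI)
  fix s x B assume s: "\<forall>n. s n \<in> DX \<phi>" and sx: "s \<longlonglongrightarrow> x" and B: "\<forall>n. phi_real \<phi> (s n) y \<le> B"
  have "lsc (\<lambda>x. \<phi> x y)" using closed y unfolding closed_sp_def by blast
  then have "\<phi> x y \<le> liminf (\<lambda>n. \<phi> (s n) y)" using sx unfolding lsc_def by blast
  also have "\<dots> \<le> limsup (\<lambda>n. \<phi> (s n) y)" by (rule Liminf_le_Limsup) simp
  also have "\<dots> \<le> ereal B" using s B phi_finite[OF _ y] by (intro Limsup_bounded) auto
  finally have le: "\<phi> x y \<le> ereal B" .
  then have "x \<in> DX \<phi>" using phi_notin_DX[OF _ y] by force
  then show "x \<in> DX \<phi> \<and> phi_real \<phi> x y \<le> B" using le phi_finite[OF _ y] by simp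
qed

lemma moreau_convex_x:
  assumes y: "y \<in> DY \<phi>"
  shows "moreau_convex (DX \<phi>) (\<lambda>x. phi_real \<phi> x y) lam"
  unfolding moreau_convex_def
proof (intro allI impI)
  fix w x0 x1 assume x0: "x0 \<in> DX \<phi>" and x1: "x1 \<in> DX \<phi>"
  obtain \<gamma> \<sigma> where g: "continuous_on {0..1} \<gamma>" "\<gamma> 0 = x0" "\<gamma> 1 = x1"
    "\<And>t. t \<in> {0..1} \<Longrightarrow> \<gamma> t \<in> DX \<phi>"
    "\<And>\<tau> t y'. tau_adm lam \<tau> \<Longrightarrow> t \<in> {0..1} \<Longrightarrow> y' \<in> DY \<phi> \<Longrightarrow>
       Phi_real \<phi> \<tau> w y (\<gamma> t) y' \<le> (1-t) * Phi_real \<phi> \<tau> w y x0 y' + t * Phi_real \<phi> \<tau> w y x1 y'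
          - (1/\<tau>+lam)/2*t*(1-t)*(dist x0 x1)^2"
    using A2_curves[OF x0 x1 y y, of w y] by metis
  have "moreau (\<lambda>x. phi_real \<phi> x y) \<tau> w (\<gamma> t) \<le> (1-t) * moreau (\<lambda>x. phi_real \<phi> x y) \<tau> w x0
      + t * moreau (\<lambda>x. phi_real \<phi> x y) \<tau> w x1 - (1/\<tau>+lam)/2*t*(1-t)*(dist x0 x1)^2"
    if "tau_adm lam \<tau>" "t \<in> {0..1}" for \<tau> t
    using g(5)[OF that y] by simp
  with g(1-4) show "\<exists>\<gamma>. continuous_on {0..1} \<gamma> \<and> \<gamma> 0 = x0 \<and> \<gamma> 1 = x1 \<and> (\<forall>t\<in>{0..1}. \<gamma> t \<in> DX \<phi>) \<and>
       (\<forall>\<tau>. tau_adm lam \<tau> \<longrightarrow> (\<forall>t\<in>{0..1}.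
          moreau (\<lambda>x. phi_real \<phi> x y) \<tau> w (\<gamma> t) \<le> (1-t) * moreau (\<lambda>x. phi_real \<phi> x y) \<tau> w x0
            + t * moreau (\<lambda>x. phi_real \<phi> x y) \<tau> w x1 - (1/\<tau>+lam)/2*t*(1-t)*(dist x0 x1)^2))"
    by blast
qed

lemma moreau_convex_y:
  assumes x: "x \<in> DX \<phi>"
  shows "moreau_convex (DY \<phi>) (\<lambda>y. - phi_real \<phi> x y) lam"
  unfolding moreau_convex_def
proof (intro allI impI)
  fix w y0 y1 assume y0: "y0 \<in> DY \<phi>" and y1: "y1 \<in> DY \<phi>"
  obtain \<gamma> \<sigma> where g: "continuous_on {0..1} \<sigma>" "\<sigma> 0 = y0" "\<sigma> 1 = y1"
    "\<And>t. t \<in> {0..1} \<Longrightarrow> \<sigma> t \<in> DY \<phi>"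
    "\<And>\<tau> t x'. tau_adm lam \<tau> \<Longrightarrow> t \<in> {0..1} \<Longrightarrow> x' \<in> DX \<phi> \<Longrightarrow>
       (1-t) * Phi_real \<phi> \<tau> x w x' y0 + t * Phi_real \<phi> \<tau> x w x' y1 + (1/\<tau>+lam)/2*t*(1-t)*(dist y0 y1)^2
          \<le> Phi_real \<phi> \<tau> x w x' (\<sigma> t)"
    using A2_curves[OF x x y0 y1, of x w] by metis
  have "moreau (\<lambda>y. - phi_real \<phi> x y) \<tau> w (\<sigma> t) \<le> (1-t) * moreau (\<lambda>y. - phi_real \<phi> x y) \<tau> w y0
      + t * moreau (\<lambda>y. - phi_real \<phi> x y) \<tau> w y1 - (1/\<tau>+lam)/2*t*(1-t)*(dist y0 y1)^2"
    if "tau_adm lam \<tau>" "t \<in> {0..1}" for \<tau> t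
    using concave_ineq_neg[OF g(5)[OF that x]] by simp
  with g(1-4) show "\<exists>\<sigma>. continuous_on {0..1} \<sigma> \<and> \<sigma> 0 = y0 \<and> \<sigma> 1 = y1 \<and> (\<forall>t\<in>{0..1}. \<sigma> t \<in> DY \<phi>) \<and>
       (\<forall>\<tau>. tau_adm lam \<tau> \<longrightarrow> (\<forall>t\<in>{0..1}.
          moreau (\<lambda>y. - phi_real \<phi> x y) \<tau> w (\<sigma> t) \<le> (1-t) * moreau (\<lambda>y. - phi_real \<phi> x y) \<tau> w y0
            + t * moreau (\<lambda>y. - phi_real \<phi> x y) \<tau> w y1 - (1/\<tau>+lam)/2*t*(1-t)*(dist y0 y1)^2))"
    by blast
qed

lemma argmin_x:
  assumes adm: "tau_adm lam \<tau>" and y: "y \<in> DY \<phi>"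
  shows "argmin_x \<phi> \<tau> xz y \<in> DX \<phi>"
    and "\<And>v. v \<in> DX \<phi> \<Longrightarrow> min_x \<phi> \<tau> xz y \<le> moreau (\<lambda>x. phi_real \<phi> x y) \<tau> xz v"
proof -
  have "\<exists>u. u \<in> DX \<phi> \<and>
      (\<forall>v\<in>DX \<phi>. moreau (\<lambda>x. phi_real \<phi> x y) \<tau> xz u \<le> moreau (\<lambda>x. phi_real \<phi> x y) \<tau> xz v)"
    using moreau_minimizer_exists[OF closed_sublevels_x[OF y] moreau_convex_x[OF y] adm DX_nonempty]
    by blast
  from someI_ex[OF this] show "argmin_x \<phi> \<tau> xz y \<in> DX \<phi>"
    and "\<And>v. v \<in> DX \<phi> \<Longrightarrow> min_x \<phi> \<tau> xz y \<le> moreau (\<lambda>x. phi_real \<phi> x y) \<tau> xz v"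
    unfolding argmin_x_def[symmetric] min_x_def by auto
qed

lemma argmin_x_growth:
  assumes adm: "tau_adm lam \<tau>" and y: "y \<in> DY \<phi>" and v: "v \<in> DX \<phi>"
  shows "min_x \<phi> \<tau> xz y + (1/\<tau>+lam)/2 * (dist (argmin_x \<phi> \<tau> xz y) v)^2
    \<le> moreau (\<lambda>x. phi_real \<phi> x y) \<tau> xz v"
  using moreau_minimizer_growth[OF moreau_convex_x[OF y] adm argmin_x(1)[OF adm y]
      argmin_x(2)[OF adm y, unfolded min_x_def] v]
  unfolding min_x_def .

text \<open>Along the concavity curve in \<open>y\<close>, evaluate the concavity inequality at the minimiser
  \<open>argmin_x (\<sigma> t)\<close> and bound its endpoint values from below by \<open>min_x\<close>.\<close>
lemma moreau_convex_neg_min_x: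
  assumes adm: "tau_adm lam \<tau>"
  shows "moreau_convex (DY \<phi>) (\<lambda>y. - min_x \<phi> \<tau> xz y) lam"
  unfolding moreau_convex_def
proof (intro allI impI)
  fix w y0 y1 assume y0: "y0 \<in> DY \<phi>" and y1: "y1 \<in> DY \<phi>"
  obtain x0 where x0: "x0 \<in> DX \<phi>" using DX_nonempty by blast
  obtain \<gamma> \<sigma> where \<sigma>: "continuous_on {0..1} \<sigma>" "\<sigma> 0 = y0" "\<sigma> 1 = y1"
      "\<And>t. t \<in> {0..1} \<Longrightarrow> \<sigma> t \<in> DY \<phi>"
      "\<And>\<tau> t x'. tau_adm lam \<tau> \<Longrightarrow> t \<in> {0..1} \<Longrightarrow> x' \<in> DX \<phi> \<Longrightarrow>
         (1-t) * Phi_real \<phi> \<tau> xz w x' y0 + t * Phi_real \<phi> \<tau> xz w x' y1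
           + (1/\<tau>+lam)/2*t*(1-t)*(dist y0 y1)^2 \<le> Phi_real \<phi> \<tau> xz w x' (\<sigma> t)"
    using A2_curves[OF x0 x0 y0 y1, of xz w] by metis
  have "moreau (\<lambda>y. - min_x \<phi> \<tau> xz y) \<tau>' w (\<sigma> t)
      \<le> (1-t) * moreau (\<lambda>y. - min_x \<phi> \<tau> xz y) \<tau>' w y0 + t * moreau (\<lambda>y. - min_x \<phi> \<tau> xz y) \<tau>' w y1
        - (1/\<tau>'+lam)/2*t*(1-t)*(dist y0 y1)^2"
    if adm': "tau_adm lam \<tau>'" and t: "t \<in> {0..1}" for \<tau>' t
  proof -
    define x where "x = argmin_x \<phi> \<tau> xz (\<sigma> t)"
    have x: "x \<in> DX \<phi>" unfolding x_def using argmin_x(1)[OF adm \<sigma>(4)[OF t]] .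
    define k where "k q = moreau (\<lambda>x. phi_real \<phi> x q) \<tau> xz x" for q
    define Q where "Q q = (dist q w)^2/(2*\<tau>')" for q
    define E where "E = (dist x xz)^2/(2*\<tau>') - (dist x xz)^2/(2*\<tau>)"
    define c where "c = (1/\<tau>'+lam)/2*t*(1-t)*(dist y0 y1)^2"
    have "Phi_real \<phi> \<tau>' xz w x q = k q + E - Q q" for q
      unfolding k_def E_def Q_def by simp
    then have "(1-t) * (k y0 + E - Q y0) + t * (k y1 + E - Q y1) + c \<le> k (\<sigma> t) + E - Q (\<sigma> t)"
      using \<sigma>(5)[OF adm' t x] unfolding c_def by simp
    moreover have "(1-t) * min_x \<phi> \<tau> xz y0 \<le> (1-t) * k y0" "t * min_x \<phi> \<tau> xz y1 \<le> t * k y1"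
      using t argmin_x(2)[OF adm y0 x] argmin_x(2)[OF adm y1 x] unfolding k_def
      by (auto intro: mult_left_mono)
    moreover have "k (\<sigma> t) = min_x \<phi> \<tau> xz (\<sigma> t)" unfolding k_def x_def min_x_def ..
    ultimately have "(1-t) * (min_x \<phi> \<tau> xz y0 - Q y0) + t * (min_x \<phi> \<tau> xz y1 - Q y1) + c
        \<le> min_x \<phi> \<tau> xz (\<sigma> t) - Q (\<sigma> t)"
      by (simp add: algebra_simps)
    from concave_ineq_neg[OF this] show ?thesis unfolding Q_def c_def by simp
  qed
  with \<sigma>(1-4) show "\<exists>\<sigma>. continuous_on {0..1} \<sigma> \<and> \<sigma> 0 = y0 \<and> \<sigma> 1 = y1 \<and> (\<forall>t\<in>{0..1}. \<sigma> t \<in> DY \<phi>) \<and>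
       (\<forall>\<tau>'. tau_adm lam \<tau>' \<longrightarrow> (\<forall>t\<in>{0..1}.
          moreau (\<lambda>y. - min_x \<phi> \<tau> xz y) \<tau>' w (\<sigma> t)
            \<le> (1-t) * moreau (\<lambda>y. - min_x \<phi> \<tau> xz y) \<tau>' w y0
              + t * moreau (\<lambda>y. - min_x \<phi> \<tau> xz y) \<tau>' w y1 - (1/\<tau>'+lam)/2*t*(1-t)*(dist y0 y1)^2))"
    by blast
qed

lemma closed_sublevels_neg_min_x:
  assumes adm: "tau_adm lam \<tau>"
  shows "closed_sublevels (DY \<phi>) (\<lambda>y. - min_x \<phi> \<tau> xz y)"
  unfolding closed_sublevels_def
proof (intro allI impI)
  fix s y B assume s: "\<forall>n. s n \<in> DY \<phi>" and sy: "s \<longlonglongrightarrow> y" and B: "\<forall>n. - min_x \<phi> \<tau> xz (s n) \<le> B"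
  have lower: "ereal (-B - (dist x xz)^2/(2*\<tau>)) \<le> \<phi> x y" if x: "x \<in> DX \<phi>" for x
  proof -
    have "ereal (-B - (dist x xz)^2/(2*\<tau>)) \<le> \<phi> x (s n)" for n
    proof -
      have "min_x \<phi> \<tau> xz (s n) \<le> phi_real \<phi> x (s n) + (dist x xz)^2/(2*\<tau>)"
        using argmin_x(2)[OF adm s[rule_format] x] .
      then have "-B - (dist x xz)^2/(2*\<tau>) \<le> phi_real \<phi> x (s n)" using B[rule_format, of n] by linarith
      then show ?thesis using phi_finite[OF x s[rule_format]] by simp
    qed
    then have "ereal (-B - (dist x xz)^2/(2*\<tau>)) \<le> liminf (\<lambda>n. \<phi> x (s n))"
      by (intro Liminf_bounded) auto
    also have "\<dots> \<le> limsup (\<lambda>n. \<phi> x (s n))" by (rule Liminf_le_Limsup) simp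
    also have "\<dots> \<le> \<phi> x y"
      using closed x sy unfolding closed_sp_def usc_def by blast
    finally show ?thesis .
  qed
  obtain x0 where x0: "x0 \<in> DX \<phi>" using DX_nonempty by blast
  have y: "y \<in> DY \<phi>" using lower[OF x0] phi_notin_DY[OF x0] by force
  have "ereal (-B - (dist (argmin_x \<phi> \<tau> xz y) xz)^2/(2*\<tau>)) \<le> ereal (phi_real \<phi> (argmin_x \<phi> \<tau> xz y) y)"
    using lower[OF argmin_x(1)[OF adm y]] phi_finite[OF argmin_x(1)[OF adm y] y] by simp
  then show "y \<in> DY \<phi> \<and> - min_x \<phi> \<tau> xz y \<le> B" using y unfolding min_x_def by simp
qed

text \<open>Let \<open>b\<close> maximise \<open>min_x - (dist _ yz)^2/(2*\<tau>)\<close>, \<open>a = argmin_x b\<close>, and \<open>\<sigma>\<close> be a concavity curve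
  from \<open>b\<close> to \<open>y1\<close>. Concavity at \<open>x = argmin_x (\<sigma> t)\<close>, maximality of \<open>b\<close> and strong convexity
  at \<open>a\<close> force \<open>Phi_real x y1\<close> below the saddle value and \<open>x\<close> to within \<open>O(\<surd>t)\<close> of \<open>a\<close>.\<close>
lemma near_argmin_below_saddle_value:
  assumes adm: "tau_adm lam \<tau>" and b: "b \<in> DY \<phi>" and y1: "y1 \<in> DY \<phi>"
    and max: "\<And>v. v \<in> DY \<phi> \<Longrightarrow>
      min_x \<phi> \<tau> xz v - (dist v yz)^2/(2*\<tau>) \<le> min_x \<phi> \<tau> xz b - (dist b yz)^2/(2*\<tau>)"
    and t: "0 < t" "t \<le> 1/2"
  defines "a \<equiv> argmin_x \<phi> \<tau> xz b"
    and "S \<equiv> min_x \<phi> \<tau> xz b - (dist b yz)^2/(2*\<tau>)"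
    and "H \<equiv> min_x \<phi> \<tau> xz y1 - (dist y1 yz)^2/(2*\<tau>)"
  shows "\<exists>x\<in>DX \<phi>. Phi_real \<phi> \<tau> xz yz x y1 \<le> S \<and> (1/\<tau>+lam)/2 * (dist a x)^2 \<le> 2 * t * (S - H)"
proof -
  have \<tau>: "0 < \<tau>" "0 < 1/\<tau> + lam" using adm unfolding tau_adm_iff by auto
  have a: "a \<in> DX \<phi>" unfolding a_def using argmin_x(1)[OF adm b] .
  obtain \<gamma> \<sigma> where \<sigma>: "\<And>t. t \<in> {0..1} \<Longrightarrow> \<sigma> t \<in> DY \<phi>"
      "\<And>\<tau> t x'. tau_adm lam \<tau> \<Longrightarrow> t \<in> {0..1} \<Longrightarrow> x' \<in> DX \<phi> \<Longrightarrow>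
         (1-t) * Phi_real \<phi> \<tau> xz yz x' b + t * Phi_real \<phi> \<tau> xz yz x' y1
           + (1/\<tau>+lam)/2*t*(1-t)*(dist b y1)^2 \<le> Phi_real \<phi> \<tau> xz yz x' (\<sigma> t)"
    using A2_curves[OF a a b y1, of xz yz] by metis
  have tin: "t \<in> {0..1}" using t by simp
  define x where "x = argmin_x \<phi> \<tau> xz (\<sigma> t)"
  have x: "x \<in> DX \<phi>" unfolding x_def using argmin_x(1)[OF adm \<sigma>(1)[OF tin]] .
  define m where "m = (1/\<tau>+lam)/2 * (dist a x)^2"
  have "0 \<le> (1/\<tau>+lam)/2*t*(1-t)*(dist b y1)^2" using \<tau> t by simp
  then have concave: "(1-t) * Phi_real \<phi> \<tau> xz yz x b + t * Phi_real \<phi> \<tau> xz yz x y1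
      \<le> Phi_real \<phi> \<tau> xz yz x (\<sigma> t)"
    using \<sigma>(2)[OF adm tin x] by linarith
  have maximal: "Phi_real \<phi> \<tau> xz yz x (\<sigma> t) \<le> S"
    using max[OF \<sigma>(1)[OF tin]] unfolding S_def min_x_def x_def by simp
  have growth: "S + m \<le> Phi_real \<phi> \<tau> xz yz x b"
    using argmin_x_growth[OF adm b x] unfolding S_def m_def a_def by simp
  have lower: "H \<le> Phi_real \<phi> \<tau> xz yz x y1"
    using argmin_x(2)[OF adm y1 x] unfolding H_def by simp
  have "0 \<le> m" unfolding m_def using \<tau> by simp
  have "P1 \<le> S" and "m \<le> 2*t*(S - H)"
    if "(1-t)*Pb + t*P1 \<le> Pt" "Pt \<le> S" "S + m \<le> Pb" "H \<le> P1" for Pb P1 Pt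
  proof -
    have "(1-t)*(S+m) \<le> (1-t)*Pb" using that(3) t by (simp add: mult_left_mono)
    moreover have "t*m \<le> (1/2)*m" using mult_right_mono[OF t(2) \<open>0 \<le> m\<close>] .
    ultimately have *: "t*P1 \<le> t*S - m/2" using that(1,2) by (simp add: algebra_simps)
    then have "t*P1 \<le> t*S" using \<open>0 \<le> m\<close> by linarith
    then show "P1 \<le> S" using t by simp
    have "t*H \<le> t*P1" using that(4) t by (simp add: mult_left_mono)
    with * show "m \<le> 2*t*(S - H)" by (simp add: algebra_simps)
  qed
  then show ?thesis using concave maximal growth lower x unfolding m_def by blast
qed

lemma Phi_real_le_at_maximizer:
  assumes adm: "tau_adm lam \<tau>" and b: "b \<in> DY \<phi>" and y1: "y1 \<in> DY \<phi>"
    and max: "\<And>v. v \<in> DY \<phi> \<Longrightarrow>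
      min_x \<phi> \<tau> xz v - (dist v yz)^2/(2*\<tau>) \<le> min_x \<phi> \<tau> xz b - (dist b yz)^2/(2*\<tau>)"
  defines "a \<equiv> argmin_x \<phi> \<tau> xz b"
  shows "Phi_real \<phi> \<tau> xz yz a y1 \<le> Phi_real \<phi> \<tau> xz yz a b"
proof -
  define S where "S = min_x \<phi> \<tau> xz b - (dist b yz)^2/(2*\<tau>)"
  define H where "H = min_x \<phi> \<tau> xz y1 - (dist y1 yz)^2/(2*\<tau>)"
  define \<mu> where "\<mu> = 1/\<tau> + lam"
  define t where "t n = inverse (real (Suc (Suc n)))" for n
  have \<tau>: "0 < \<tau>" "0 < \<mu>" using adm unfolding tau_adm_iff \<mu>_def by auto
  have t: "0 < t n" "t n \<le> 1/2" for n
    unfolding t_def by (auto simp: field_simps)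
  have "\<forall>n. \<exists>x\<in>DX \<phi>. Phi_real \<phi> \<tau> xz yz x y1 \<le> S \<and> \<mu>/2 * (dist a x)^2 \<le> 2 * t n * (S - H)"
    using near_argmin_below_saddle_value[OF adm b y1 max t] unfolding S_def H_def \<mu>_def a_def by blast
  then obtain xs where xs: "\<And>n. xs n \<in> DX \<phi>" "\<And>n. Phi_real \<phi> \<tau> xz yz (xs n) y1 \<le> S"
      "\<And>n. \<mu>/2 * (dist a (xs n))^2 \<le> 2 * t n * (S - H)"
    by metis
  have "(\<lambda>n. (dist (xs n) a)^2) \<longlonglongrightarrow> 0"
  proof (rule tendsto_sandwich[OF _ _ tendsto_const])
    show "\<forall>\<^sub>F n in sequentially. 0 \<le> (dist (xs n) a)^2" by simp
    show "\<forall>\<^sub>F n in sequentially. (dist (xs n) a)^2 \<le> 4 * (S - H) / \<mu> * t n"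
      using xs(3) \<tau> by (intro always_eventually allI) (simp add: dist_commute field_simps)
    show "(\<lambda>n. 4 * (S - H) / \<mu> * t n) \<longlonglongrightarrow> 0"
      unfolding t_def by (intro tendsto_mult_right_zero LIMSEQ_Suc LIMSEQ_inverse_real_of_nat)
  qed
  then have "(\<lambda>n. dist (xs n) a) \<longlonglongrightarrow> 0"
    using tendsto_real_sqrt by force
  then have xs_a: "xs \<longlonglongrightarrow> a" using tendsto_dist_iff by blast
  have "(\<lambda>n. (dist (xs n) xz)^2/(2*\<tau>) - (dist y1 yz)^2/(2*\<tau>))
      \<longlonglongrightarrow> (dist a xz)^2/(2*\<tau>) - (dist y1 yz)^2/(2*\<tau>)"
    using \<tau> by (intro tendsto_intros xs_a) auto
  from closed_sublevels_limit[OF closed_sublevels_x[OF y1] xs(1) xs_a this, of S]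
  have "Phi_real \<phi> \<tau> xz yz a y1 \<le> S" using xs(2) by (simp add: add_diff_eq)
  also have "S = Phi_real \<phi> \<tau> xz yz a b" unfolding S_def a_def min_x_def by simp
  finally show ?thesis .
qed

text \<open>The saddle point is \<open>(argmin_x b, b)\<close> for a maximiser \<open>b\<close> of the concave-type function
  \<open>min_x - (dist _ yz)^2/(2*\<tau>)\<close>.\<close>
lemma saddle_point_exists:
  assumes adm: "tau_adm lam \<tau>"
  shows "\<exists>a b. saddle_point (Phi \<phi> \<tau> xz yz) a b"
proof -
  obtain b where b: "b \<in> DY \<phi>"
    "\<And>v. v \<in> DY \<phi> \<Longrightarrow> moreau (\<lambda>y. - min_x \<phi> \<tau> xz y) \<tau> yz b \<le> moreau (\<lambda>y. - min_x \<phi> \<tau> xz y) \<tau> yz v"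
    using moreau_minimizer_exists[OF closed_sublevels_neg_min_x[OF adm] moreau_convex_neg_min_x[OF adm]
        adm DY_nonempty]
    by blast
  define a where "a = argmin_x \<phi> \<tau> xz b"
  have a: "a \<in> DX \<phi>" unfolding a_def using argmin_x(1)[OF adm b(1)] .
  have "Phi \<phi> \<tau> xz yz a y \<le> Phi \<phi> \<tau> xz yz a b" for y
  proof (cases "y \<in> DY \<phi>")
    case True
    have "Phi_real \<phi> \<tau> xz yz a y \<le> Phi_real \<phi> \<tau> xz yz a b"
      unfolding a_def using b by (intro Phi_real_le_at_maximizer[OF adm b(1) True]) force
    then show ?thesis unfolding Phi_finite[OF a True] Phi_finite[OF a b(1)] by simp
  next
    case False
    then show ?thesis unfolding Phi_def using phi_notin_DY[OF a] by simp
  qed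
  moreover have "Phi \<phi> \<tau> xz yz a b \<le> Phi \<phi> \<tau> xz yz x b" for x
  proof (cases "x \<in> DX \<phi>")
    case True
    have "Phi_real \<phi> \<tau> xz yz a b \<le> Phi_real \<phi> \<tau> xz yz x b"
      using argmin_x(2)[OF adm b(1) True] unfolding a_def min_x_def by simp
    then show ?thesis unfolding Phi_finite[OF a b(1)] Phi_finite[OF True b(1)] by simp
  next
    case False
    then show ?thesis unfolding Phi_def using phi_notin_DX[OF _ b(1)] by simp
  qed
  ultimately show ?thesis unfolding saddle_point_def by blast
qed

subsection \<open>Uniqueness and continuous dependence\<close>

lemma saddle_point_real:
  assumes sp: "saddle_point (Phi \<phi> \<tau> x y) p q"
  shows "p \<in> DX \<phi>" "q \<in> DY \<phi>"
    and "\<And>x'. x' \<in> DX \<phi> \<Longrightarrow> moreau (\<lambda>x. phi_real \<phi> x q) \<tau> x p \<le> moreau (\<lambda>x. phi_real \<phi> x q) \<tau> x x'"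
    and "\<And>y'. y' \<in> DY \<phi> \<Longrightarrow> moreau (\<lambda>y. - phi_real \<phi> p y) \<tau> y q \<le> moreau (\<lambda>y. - phi_real \<phi> p y) \<tau> y y'"
proof -
  have s: "Phi \<phi> \<tau> x y p y' \<le> Phi \<phi> \<tau> x y p q" "Phi \<phi> \<tau> x y p q \<le> Phi \<phi> \<tau> x y x' q" for x' y'
    using sp unfolding saddle_point_def by auto
  obtain x0 where x0: "x0 \<in> DX \<phi>" using DX_nonempty by blast
  obtain y0 where y0: "y0 \<in> DY \<phi>" using DY_nonempty by blast
  show p: "p \<in> DX \<phi>"
  proof (rule ccontr)
    assume "p \<notin> DX \<phi>"
    then obtain y' where "\<phi> p y' = \<infinity>" unfolding DX_def by (auto simp: less_top)
    then have "Phi \<phi> \<tau> x y p q = \<infinity>" using s(1)[of y'] unfolding Phi_def by simp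
    then have "\<phi> x0 q = \<infinity>" using s(2)[of x0] unfolding Phi_def by (cases "\<phi> x0 q") auto
    then show False using x0 unfolding DX_def by auto
  qed
  show q: "q \<in> DY \<phi>"
  proof (rule ccontr)
    assume "q \<notin> DY \<phi>"
    then obtain x' where "\<phi> x' q = -\<infinity>" unfolding DY_def by (auto simp: not_less)
    then have "Phi \<phi> \<tau> x y p q = -\<infinity>" using s(2)[of x'] unfolding Phi_def by simp
    then have "\<phi> p y0 = -\<infinity>" using s(1)[of y0] unfolding Phi_def by (cases "\<phi> p y0") auto
    then show False using y0 unfolding DY_def by auto
  qed
  show "moreau (\<lambda>x. phi_real \<phi> x q) \<tau> x p \<le> moreau (\<lambda>x. phi_real \<phi> x q) \<tau> x x'" if "x' \<in> DX \<phi>" for x'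
    using s(2)[of x'] unfolding Phi_finite[OF p q] Phi_finite[OF that q] by simp
  show "moreau (\<lambda>y. - phi_real \<phi> p y) \<tau> y q \<le> moreau (\<lambda>y. - phi_real \<phi> p y) \<tau> y y'" if "y' \<in> DY \<phi>" for y'
    using s(1)[of y'] unfolding Phi_finite[OF p q] Phi_finite[OF p that] by simp
qed

text \<open>Quadratic growth of the four partial Moreau--Yosida functionals at two saddle points;
  the values of \<open>\<phi>\<close> cancel in the sum.\<close>
lemma saddle_points_dist_estimate:
  assumes adm: "tau_adm lam \<tau>" and s1: "saddle_point (Phi \<phi> \<tau> x y) a b"
    and s2: "saddle_point (Phi \<phi> \<tau> x2 y2) a2 b2"
  shows "2 * (1 + \<tau> * lam) * ((dist a a2)^2 + (dist b b2)^2) \<le>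
    ((dist a2 x)^2 - (dist a2 x2)^2) + ((dist a x2)^2 - (dist a x)^2)
    + ((dist b2 y)^2 - (dist b2 y2)^2) + ((dist b y2)^2 - (dist b y)^2)"
proof -
  note r1 = saddle_point_real[OF s1] and r2 = saddle_point_real[OF s2]
  have \<tau>: "0 < \<tau>" using adm unfolding tau_adm_iff by simp
  note g1 = moreau_minimizer_growth[OF moreau_convex_x[OF r1(2)] adm r1(1) r1(3) r2(1)]
  note g2 = moreau_minimizer_growth[OF moreau_convex_y[OF r1(1)] adm r1(2) r1(4) r2(2)]
  note g3 = moreau_minimizer_growth[OF moreau_convex_x[OF r2(2)] adm r2(1) r2(3) r1(1)]
  note g4 = moreau_minimizer_growth[OF moreau_convex_y[OF r2(1)] adm r2(2) r2(4) r1(2)]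
  define M where "M = (1/\<tau>+lam)/2 * (dist a a2)^2 + (1/\<tau>+lam)/2 * (dist b b2)^2"
  have "M + M \<le> (dist a2 x)^2/(2*\<tau>) - (dist a2 x2)^2/(2*\<tau>) + (dist a x2)^2/(2*\<tau>) - (dist a x)^2/(2*\<tau>)
      + (dist b2 y)^2/(2*\<tau>) - (dist b2 y2)^2/(2*\<tau>) + (dist b y2)^2/(2*\<tau>) - (dist b y)^2/(2*\<tau>)"
    using g1 g2 g3 g4 unfolding M_def by (simp add: dist_commute)
  also have "\<dots> = (((dist a2 x)^2 - (dist a2 x2)^2) + ((dist a x2)^2 - (dist a x)^2)
      + ((dist b2 y)^2 - (dist b2 y2)^2) + ((dist b y2)^2 - (dist b y)^2)) / (2*\<tau>)"
    by (simp add: add_divide_distrib diff_divide_distrib)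
  finally have "2*\<tau>*(M + M) \<le> ((dist a2 x)^2 - (dist a2 x2)^2) + ((dist a x2)^2 - (dist a x)^2)
      + ((dist b2 y)^2 - (dist b2 y2)^2) + ((dist b y2)^2 - (dist b y)^2)"
    using \<tau> by (simp add: pos_le_divide_eq mult.commute)
  moreover have "2*\<tau>*(M + M) = 2 * (1 + \<tau> * lam) * ((dist a a2)^2 + (dist b b2)^2)"
    unfolding M_def using \<tau> by (simp add: field_simps)
  ultimately show ?thesis by simp
qed

lemma saddle_point_unique:
  assumes adm: "tau_adm lam \<tau>" and "saddle_point (Phi \<phi> \<tau> x y) a b" "saddle_point (Phi \<phi> \<tau> x y) a' b'"
  shows "a' = a" "b' = b"
proof -
  have c: "0 < 1 + \<tau> * lam" using tau_adm_pos[OF adm] .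
  have "2 * (1 + \<tau> * lam) * ((dist a a')^2 + (dist b b')^2) \<le> 0"
    using saddle_points_dist_estimate[OF assms] by simp
  then have "(dist a a')^2 + (dist b b')^2 \<le> 0"
    using c by (simp add: mult_le_0_iff)
  then have "(dist a a')^2 = 0" "(dist b b')^2 = 0"
    using zero_le_power2[of "dist a a'"] zero_le_power2[of "dist b b'"] by linarith+
  then show "a' = a" "b' = b" by simp_all
qed

lemma resolvent_saddle_point:
  assumes adm: "tau_adm lam \<tau>"
  shows "saddle_point (Phi \<phi> \<tau> (fst z) (snd z)) (fst (resolvent \<phi> \<tau> z)) (snd (resolvent \<phi> \<tau> z))"
proof -
  obtain a b where ab: "saddle_point (Phi \<phi> \<tau> (fst z) (snd z)) a b"
    using saddle_point_exists[OF adm] by blast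
  have "\<exists>!p. saddle_point (Phi \<phi> \<tau> (fst z) (snd z)) (fst p) (snd p)"
  proof (rule ex1I[of _ "(a, b)"])
    show "saddle_point (Phi \<phi> \<tau> (fst z) (snd z)) (fst (a, b)) (snd (a, b))" using ab by simp
  next
    fix p assume "saddle_point (Phi \<phi> \<tau> (fst z) (snd z)) (fst p) (snd p)"
    then show "p = (a, b)" using saddle_point_unique[OF adm ab] by (simp add: prod_eq_iff)
  qed
  then show ?thesis unfolding resolvent_def by (rule theI')
qed

lemma resolvent_dist_estimate:
  assumes adm: "tau_adm lam \<tau>"
  defines "J \<equiv> resolvent \<phi> \<tau>"
  shows "(1 + \<tau> * lam) * (dist (J w) (J z))^2
    \<le> 2 * dist w z * dist (J w) (J z) + 4 * dist w z * (dist (J z) z + dist w z)"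
proof -
  obtain x y where z: "z = (x, y)" by fastforce
  obtain x2 y2 where w: "w = (x2, y2)" by fastforce
  obtain a b where Jz: "J z = (a, b)" by fastforce
  obtain a2 b2 where Jw: "J w = (a2, b2)" by fastforce
  define e where "e = dist w z"
  define R where "R = dist (J z) z"
  define D where "D = dist (J w) (J z)"
  have sz: "saddle_point (Phi \<phi> \<tau> x y) a b"
    using resolvent_saddle_point[OF adm, of z] Jz unfolding J_def z by simp
  have sw: "saddle_point (Phi \<phi> \<tau> x2 y2) a2 b2"
    using resolvent_saddle_point[OF adm, of w] Jw unfolding J_def w by simp
  have dx: "dist x2 x \<le> e" "dist x x2 \<le> e" and dy: "dist y2 y \<le> e" "dist y y2 \<le> e"
    unfolding e_def w z by (simp_all add: dist_Pair_Pair dist_commute real_sqrt_sum_squares_ge1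
        real_sqrt_sum_squares_ge2)
  have Ra: "dist a x \<le> R" and Rb: "dist b y \<le> R"
    using Jz unfolding R_def z by (simp_all add: dist_Pair_Pair real_sqrt_sum_squares_ge1
        real_sqrt_sum_squares_ge2)
  have Da: "dist a2 a \<le> D" and Db: "dist b2 b \<le> D"
    unfolding D_def Jw Jz by (simp_all add: dist_Pair_Pair real_sqrt_sum_squares_ge1
        real_sqrt_sum_squares_ge2)
  have D2: "D^2 = (dist a a2)^2 + (dist b b2)^2"
    unfolding D_def Jw Jz by (simp add: dist_Pair_Pair dist_commute)
  have "dist a2 x2 \<le> D + R + e"
    using dist_triangle[of a2 x2 a] dist_triangle[of a x2 x] Da Ra dx by (simp add: dist_commute)
  then have T1: "(dist a2 x)^2 - (dist a2 x2)^2 \<le> e * (2*(D + R + e) + e)"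
    by (rule power2_dist_diff_le[OF dx(2)])
  have T2: "(dist a x2)^2 - (dist a x)^2 \<le> e * (2*R + e)"
    by (rule power2_dist_diff_le[OF dx(1) Ra])
  have "dist b2 y2 \<le> D + R + e"
    using dist_triangle[of b2 y2 b] dist_triangle[of b y2 y] Db Rb dy by (simp add: dist_commute)
  then have T3: "(dist b2 y)^2 - (dist b2 y2)^2 \<le> e * (2*(D + R + e) + e)"
    by (rule power2_dist_diff_le[OF dy(2)])
  have T4: "(dist b y2)^2 - (dist b y)^2 \<le> e * (2*R + e)"
    by (rule power2_dist_diff_le[OF dy(1) Rb])
  have "2 * (1 + \<tau> * lam) * D^2 \<le> 2 * (e * (2*(D + R + e) + e)) + 2 * (e * (2*R + e))"
    using saddle_points_dist_estimate[OF adm sz sw] T1 T2 T3 T4 unfolding D2 by linarith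
  then show ?thesis unfolding e_def[symmetric] R_def[symmetric] D_def[symmetric]
    by (simp add: algebra_simps)
qed

lemma continuous_on_resolvent:
  assumes adm: "tau_adm lam \<tau>"
  shows "continuous_on UNIV (resolvent \<phi> \<tau>)"
proof (intro continuous_at_imp_continuous_on ballI)
  fix z :: "'a \<times> 'b"
  define J where "J = resolvent \<phi> \<tau>"
  define c where "c = 1 + \<tau> * lam"
  define R where "R = dist (J z) z"
  define bound where "bound w = 2 * dist w z / c + sqrt (4 * dist w z * (R + dist w z) / c)" for w
  have c: "0 < c" unfolding c_def using tau_adm_pos[OF adm] .
  have le: "dist (J w) (J z) \<le> bound w" for w
    unfolding bound_def using resolvent_dist_estimate[OF adm, of w z] c
    by (intro quadratic_inequality_bound) (simp_all add: J_def c_def R_def add_nonneg_nonneg)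
  have "\<forall>\<^sub>F w in at z. norm (dist (J w) (J z)) \<le> bound w"
    using le by (intro always_eventually allI) simp
  moreover have "(bound \<longlongrightarrow> 0) (at z)"
  proof -
    have "((\<lambda>w. dist w z) \<longlongrightarrow> 0) (at z)"
      using tendsto_dist_iff[THEN iffD1, OF tendsto_ident_at] .
    then have "(bound \<longlongrightarrow> 2 * 0 / c + sqrt (4 * 0 * (R + 0) / c)) (at z)"
      unfolding bound_def by (intro tendsto_intros) (use c in auto)
    then show ?thesis by simp
  qed
  ultimately have "((\<lambda>w. dist (J w) (J z)) \<longlongrightarrow> 0) (at z)"
    by (rule Lim_null_comparison)
  then show "isCont (resolvent \<phi> \<tau>) z"
    unfolding isCont_def J_def by (rule tendsto_dist_iff[THEN iffD2])
qed

end

theorem mainTheorem9: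
  fixes \<phi> :: "'a::complete_space \<Rightarrow> 'b::complete_space \<Rightarrow> ereal" and lam \<tau> :: real
  assumes "proper_sp \<phi>" and "closed_sp \<phi>" and "A1 \<phi>" and "A2 \<phi> lam"
    and "tau_adm lam \<tau>"
  shows "continuous_on (closure (Dom \<phi>)) (resolvent \<phi> \<tau>)"
proof -
  interpret saddle_problem \<phi> lam using assms(1-4) by unfold_locales
  show ?thesis using continuous_on_resolvent[OF assms(5)] by (rule continuous_on_subset) simp
qed

end
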